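(* In $TTR$, if $A$ is a $\perp$-type and $A\subseteq B$, then $B$ is a $\perp$-type.
   Context: $TTR$ types: over a second-order language with first-order variables, function symbols, $n$-ary predicate variables and symbols, and a fixed system $\mathbf E$ of equations; atomic $\perp$ and $X(t_1,\dots,t_n)$; constructors $\to$, $\forall x$, $\forall X$, and $\mu Cx_1\dots x_nA\langle t_1,\dots,t_n\rangle$ for $C$ an $n$-ary predicate symbol occurring and positive in $A$. Subtyping $\subseteq$ is generated by: reflexivity; $A\subseteq A',B\subseteq B'\Rightarrow A'\to B\subseteq A\to B'$; $A[G/v]\subseteq B\Rightarrow\forall vA\subseteq B$ ($G$ a term or formula as appropriate); $A\subseteq B\Rightarrow A\subseteq\forall vB$ ($v$ not free in $A$); $A\subseteq B[v/y]\Rightarrow A\subseteq B[w/y]$ for $v=w$ an instance of an equation of $\mathbf E$; transitivity; $D[\mu C\bar xD\langle\bar z\rangle/C(\bar z)][\bar t/\bar x]\subseteq\mu C\bar xD\langle\bar t\rangle$ and its converse; $D[E/C(\bar x)]\subseteq E\Rightarrow\mu C\bar xD\langle\bar t\rangle\subseteq E[\bar t/\bar x]$. $\perp$-types: $\perp$ is a $\perp$-type; if $A$ is a $\perp$-type then $B\to A$ (any type $B$), $\forall vA$ (any variable $v$), and $\mu Cx_1\dots x_nA\langle t_1,\dots,t_n\rangle$ ($C$ an $n$-ary predicate symbol occurring and positive in $A$) are $\perp$-types. *)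

theory Defs
  imports Main
begin

text \<open>First-order terms over function symbols of type 'f.
  First-order variables are de Bruijn indices.\<close>
datatype 'f trm = TV nat | Fn 'f "'f trm list"

text \<open>Predicate variables (bound by AllP) and predicate symbols (bound by Mu)
  live in two separate namespaces; in each namespace, a predicate of arity m is
  identified by the pair (m, index), where the de Bruijn index only counts binders of
  the same arity. The arity of an occurrence  PV i ts / PS i ts  is  length ts.
  AllT binds one first-order variable, AllP n binds one n-ary predicate variable.
  Mu A ts  is  mu C x_1..x_n A <t_1..t_n>  with n = length ts: it binds the n-ary
  predicate symbol C (index 0 of arity n) and the first-order variables
  x_1..x_n (indices 0..n-1 in A, x_(j+1) corresponds to t_(j+1)).\<close>
datatype 'f ty =
    Bot
  | PV nat "'f trm list"
  | PS nat "'f trm list"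
  | Arr "'f ty" "'f ty"
  | AllT "'f ty"
  | AllP nat "'f ty"
  | Mu "'f ty" "'f trm list"

fun substTm :: "(nat \<Rightarrow> 'f trm) \<Rightarrow> 'f trm \<Rightarrow> 'f trm" where
  "substTm \<sigma> (TV i) = \<sigma> i"
| "substTm \<sigma> (Fn f ts) = Fn f (map (substTm \<sigma>) ts)"

definition upT :: "(nat \<Rightarrow> 'f trm) \<Rightarrow> nat \<Rightarrow> 'f trm" where
  "upT \<sigma> j = (case j of 0 \<Rightarrow> TV 0 | Suc k \<Rightarrow> substTm (\<lambda>l. TV (Suc l)) (\<sigma> k))"

fun substF :: "(nat \<Rightarrow> 'f trm) \<Rightarrow> 'f ty \<Rightarrow> 'f ty" where
  "substF \<sigma> Bot = Bot"
| "substF \<sigma> (PV i ts) = PV i (map (substTm \<sigma>) ts)"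
| "substF \<sigma> (PS i ts) = PS i (map (substTm \<sigma>) ts)"
| "substF \<sigma> (Arr A B) = Arr (substF \<sigma> A) (substF \<sigma> B)"
| "substF \<sigma> (AllT A) = AllT (substF (upT \<sigma>) A)"
| "substF \<sigma> (AllP n A) = AllP n (substF \<sigma> A)"
| "substF \<sigma> (Mu A ts) = Mu (substF ((upT ^^ length ts) \<sigma>) A) (map (substTm \<sigma>) ts)"

definition shF :: "nat \<Rightarrow> nat \<Rightarrow> 'f ty \<Rightarrow> 'f ty" where
  "shF n k = substF (\<lambda>j. if j < n then TV j else TV (j + k))"

definition inst0 :: "'f trm \<Rightarrow> nat \<Rightarrow> 'f trm" where
  "inst0 t j = (case j of 0 \<Rightarrow> t | Suc k \<Rightarrow> TV k)"

definition instL :: "'f trm list \<Rightarrow> nat \<Rightarrow> 'f trm" where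
  "instL ts j = (if j < length ts then ts ! j else TV (j - length ts))"

definition upR :: "(nat \<Rightarrow> nat) \<Rightarrow> nat \<Rightarrow> nat" where
  "upR f j = (case j of 0 \<Rightarrow> 0 | Suc k \<Rightarrow> Suc (f k))"

fun renP :: "(nat \<Rightarrow> nat \<Rightarrow> nat) \<Rightarrow> (nat \<Rightarrow> nat \<Rightarrow> nat) \<Rightarrow> 'f ty \<Rightarrow> 'f ty" where
  "renP fp fs Bot = Bot"
| "renP fp fs (PV i ts) = PV (fp (length ts) i) ts"
| "renP fp fs (PS i ts) = PS (fs (length ts) i) ts"
| "renP fp fs (Arr A B) = Arr (renP fp fs A) (renP fp fs B)"
| "renP fp fs (AllT A) = AllT (renP fp fs A)"
| "renP fp fs (AllP n A) = AllP n (renP (fp(n := upR (fp n))) fs A)"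
| "renP fp fs (Mu A ts) = Mu (renP fp (fs(length ts := upR (fs (length ts)))) A) ts"

definition shP :: "nat \<Rightarrow> 'f ty \<Rightarrow> 'f ty" where
  "shP m = renP (\<lambda>a. if a = m then Suc else id) (\<lambda>a. id)"

definition shS :: "nat \<Rightarrow> 'f ty \<Rightarrow> 'f ty" where
  "shS m = renP (\<lambda>a. id) (\<lambda>a. if a = m then Suc else id)"

text \<open>A formula abstraction of arity m is a type G whose first-order indices
  0..m-1 are the parameters x_1..x_m and whose index j \<open>\<ge> m\<close> denotes the
  free variable j - m of the surrounding context.\<close>
definition inst :: "nat \<Rightarrow> 'f ty \<Rightarrow> 'f trm list \<Rightarrow> 'f ty" where
  "inst m G ts = substF (\<lambda>j. if j < m then ts ! j else TV (j - m)) G"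

definition idPV :: "nat \<Rightarrow> nat \<Rightarrow> 'f ty" where
  "idPV m i = PV i (map TV [0..<m])"

definition idPS :: "nat \<Rightarrow> nat \<Rightarrow> 'f ty" where
  "idPS m i = PS i (map TV [0..<m])"

definition liftFOa :: "nat \<Rightarrow> (nat \<Rightarrow> nat \<Rightarrow> 'f ty) \<Rightarrow> nat \<Rightarrow> nat \<Rightarrow> 'f ty" where
  "liftFOa k \<sigma> m i = substF (\<lambda>j. if j < m then TV j else TV (j + k)) (\<sigma> m i)"

definition upPV :: "nat \<Rightarrow> (nat \<Rightarrow> nat \<Rightarrow> 'f ty) \<Rightarrow> nat \<Rightarrow> nat \<Rightarrow> 'f ty" where
  "upPV n \<sigma> m i = (if m = n then (case i of 0 \<Rightarrow> idPV m 0 | Suc j \<Rightarrow> shP n (\<sigma> m j))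
                    else shP n (\<sigma> m i))"

definition upPS :: "nat \<Rightarrow> (nat \<Rightarrow> nat \<Rightarrow> 'f ty) \<Rightarrow> nat \<Rightarrow> nat \<Rightarrow> 'f ty" where
  "upPS n \<sigma> m i = (if m = n then (case i of 0 \<Rightarrow> idPS m 0 | Suc j \<Rightarrow> shS n (\<sigma> m j))
                    else shS n (\<sigma> m i))"

fun substP :: "(nat \<Rightarrow> nat \<Rightarrow> 'f ty) \<Rightarrow> (nat \<Rightarrow> nat \<Rightarrow> 'f ty) \<Rightarrow> 'f ty \<Rightarrow> 'f ty" where
  "substP \<sigma>P \<sigma>S Bot = Bot"
| "substP \<sigma>P \<sigma>S (PV i ts) = inst (length ts) (\<sigma>P (length ts) i) ts"
| "substP \<sigma>P \<sigma>S (PS i ts) = inst (length ts) (\<sigma>S (length ts) i) ts"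
| "substP \<sigma>P \<sigma>S (Arr A B) = Arr (substP \<sigma>P \<sigma>S A) (substP \<sigma>P \<sigma>S B)"
| "substP \<sigma>P \<sigma>S (AllT A) = AllT (substP (liftFOa 1 \<sigma>P) (liftFOa 1 \<sigma>S) A)"
| "substP \<sigma>P \<sigma>S (AllP n A) = AllP n (substP (upPV n \<sigma>P) (\<lambda>m i. shP n (\<sigma>S m i)) A)"
| "substP \<sigma>P \<sigma>S (Mu A ts) =
     Mu (substP (\<lambda>m i. shS (length ts) (liftFOa (length ts) \<sigma>P m i))
                (upPS (length ts) (liftFOa (length ts) \<sigma>S)) A) ts"

definition substX :: "nat \<Rightarrow> 'f ty \<Rightarrow> 'f ty \<Rightarrow> 'f ty" where
  "substX n G = substP (\<lambda>m i. if m = n then (case i of 0 \<Rightarrow> G | Suc j \<Rightarrow> idPV m j) else idPV m i) idPS"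

definition substC :: "nat \<Rightarrow> 'f ty \<Rightarrow> 'f ty \<Rightarrow> 'f ty" where
  "substC n G = substP idPV (\<lambda>m i. if m = n then (case i of 0 \<Rightarrow> G | Suc j \<Rightarrow> idPS m j) else idPS m i)"

text \<open>D[mu C x D<z>/C(z)][t/x] for  Mu D ts.\<close>
definition unfoldMu :: "'f ty \<Rightarrow> 'f trm list \<Rightarrow> 'f ty" where
  "unfoldMu D ts = substC (length ts)
      (Mu (shF (length ts) (length ts) D) (map TV [0..<length ts]))
      (substF (instL ts) D)"

fun occS :: "nat \<Rightarrow> nat \<Rightarrow> 'f ty \<Rightarrow> bool" where
  "occS m i (PS j ts) = (j = i \<and> length ts = m)"
| "occS m i (Arr A B) = (occS m i A \<or> occS m i B)"
| "occS m i (AllT A) = occS m i A"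
| "occS m i (AllP n A) = occS m i A"
| "occS m i (Mu A ts) = occS m (if length ts = m then Suc i else i) A"
| "occS m i _ = False"

text \<open>Every occurrence of the predicate symbol (m,i) in A has polarity b
  (True = positive: to the left of an even number of arrows).\<close>
fun allpol :: "bool \<Rightarrow> nat \<Rightarrow> nat \<Rightarrow> 'f ty \<Rightarrow> bool" where
  "allpol b m i (PS j ts) = (b \<or> j \<noteq> i \<or> length ts \<noteq> m)"
| "allpol b m i (Arr A B) = (allpol (\<not> b) m i A \<and> allpol b m i B)"
| "allpol b m i (AllT A) = allpol b m i A"
| "allpol b m i (AllP n A) = allpol b m i A"
| "allpol b m i (Mu A ts) = allpol b m (if length ts = m then Suc i else i) A"
| "allpol b m i _ = True"

definition positiveS :: "nat \<Rightarrow> nat \<Rightarrow> 'f ty \<Rightarrow> bool" where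
  "positiveS m i A = allpol True m i A"

fun is_type :: "'f ty \<Rightarrow> bool" where
  "is_type Bot = True"
| "is_type (PV i ts) = True"
| "is_type (PS i ts) = True"
| "is_type (Arr A B) = (is_type A \<and> is_type B)"
| "is_type (AllT A) = is_type A"
| "is_type (AllP n A) = is_type A"
| "is_type (Mu A ts) = (is_type A \<and> occS (length ts) 0 A \<and> positiveS (length ts) 0 A)"

definition eq_inst :: "('f trm \<times> 'f trm) set \<Rightarrow> 'f trm \<Rightarrow> 'f trm \<Rightarrow> bool" where
  "eq_inst E v w = (\<exists>l r \<sigma>. (l, r) \<in> E \<and> v = substTm \<sigma> l \<and> w = substTm \<sigma> r)"

inductive subty :: "('f trm \<times> 'f trm) set \<Rightarrow> 'f ty \<Rightarrow> 'f ty \<Rightarrow> bool" for E where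
  refl: "is_type A \<Longrightarrow> subty E A A"
| arr: "subty E A A' \<Longrightarrow> subty E B B' \<Longrightarrow> subty E (Arr A' B) (Arr A B')"
| allT_L: "is_type (AllT A) \<Longrightarrow> subty E (substF (inst0 t) A) B \<Longrightarrow> subty E (AllT A) B"
| allP_L: "is_type (AllP n A) \<Longrightarrow> is_type G \<Longrightarrow> subty E (substX n G A) B \<Longrightarrow> subty E (AllP n A) B"
| allT_R: "subty E (shF 0 1 A) B \<Longrightarrow> subty E A (AllT B)"
| allP_R: "subty E (shP n A) B \<Longrightarrow> subty E A (AllP n B)"
| eqn: "eq_inst E v w \<Longrightarrow> is_type B \<Longrightarrow> subty E A (substF (TV(y := v)) B)
          \<Longrightarrow> subty E A (substF (TV(y := w)) B)"
| trans: "subty E A B \<Longrightarrow> subty E B C \<Longrightarrow> subty E A C"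
| mu_fold: "is_type (Mu D ts) \<Longrightarrow> subty E (unfoldMu D ts) (Mu D ts)"
| mu_unfold: "is_type (Mu D ts) \<Longrightarrow> subty E (Mu D ts) (unfoldMu D ts)"
| mu_ind: "is_type (Mu D ts) \<Longrightarrow> is_type F \<Longrightarrow>
     subty E (substC (length ts) (shF (length ts) (length ts) F) D) F \<Longrightarrow>
     subty E (Mu D ts) (substF (instL ts) F)"

inductive botty :: "'f ty \<Rightarrow> bool" where
  bot: "botty Bot"
| arr: "is_type B \<Longrightarrow> botty A \<Longrightarrow> botty (Arr B A)"
| allT: "botty A \<Longrightarrow> botty (AllT A)"
| allP: "botty A \<Longrightarrow> botty (AllP n A)"
| mu: "botty A \<Longrightarrow> occS (length ts) 0 A \<Longrightarrow> positiveS (length ts) 0 A \<Longrightarrow> botty (Mu A ts)"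

end

theory Submission
  imports Defs
begin

text \<open>A \<open>\<bottom>\<close>-type is exactly a well-formed type whose target, after stripping arrows,
  quantifiers and fixed points, is \<open>\<bottom>\<close>, and each subtyping rule preserves both properties.
  Substitution never touches the target, and a target \<open>\<bottom>\<close> of a substitution instance
  comes either from the type itself or from a substituted formula, which in an unfolding is
  the fixed point itself. Well-formedness survives the unfolding of a fixed point because
  polarities compose under capture-avoiding substitution, so the bound predicate symbol
  still occurs, and only positively.\<close>

fun ends_in_Bot :: "'f ty \<Rightarrow> bool" where
  "ends_in_Bot Bot = True"
| "ends_in_Bot (Arr A B) = ends_in_Bot B"
| "ends_in_Bot (AllT A) = ends_in_Bot A"
| "ends_in_Bot (AllP n A) = ends_in_Bot A"
| "ends_in_Bot (Mu A ts) = ends_in_Bot A"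
| "ends_in_Bot _ = False"

lemma botty_iff_is_type_ends_in_Bot: "botty A \<longleftrightarrow> is_type A \<and> ends_in_Bot A"
proof
  show "botty A \<Longrightarrow> is_type A \<and> ends_in_Bot A"
    by (induction rule: botty.induct) (auto simp: positiveS_def)
  show "is_type A \<and> ends_in_Bot A \<Longrightarrow> botty A"
    by (induction A) (auto intro: botty.intros simp: positiveS_def)
qed

lemma allpol_if_not_occS: "\<not> occS m i A \<Longrightarrow> allpol b m i A"
  by (induction A arbitrary: b i) auto

lemma substF_invariants [simp]:
  "occS m i (substF \<sigma> A) = occS m i A"
  "allpol b m i (substF \<sigma> A) = allpol b m i A"
  "is_type (substF \<sigma> A) = is_type A"
  "ends_in_Bot (substF \<sigma> A) = ends_in_Bot A"
  by (induction A arbitrary: \<sigma> m i b) (auto simp: positiveS_def)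

lemma liftFOa_invariants [simp]:
  "occS k j (liftFOa l \<sigma> m i) = occS k j (\<sigma> m i)"
  "allpol b k j (liftFOa l \<sigma> m i) = allpol b k j (\<sigma> m i)"
  "is_type (liftFOa l \<sigma> m i) = is_type (\<sigma> m i)"
  "ends_in_Bot (liftFOa l \<sigma> m i) = ends_in_Bot (\<sigma> m i)"
  by (simp_all add: liftFOa_def)

lemma inst_invariants [simp]:
  "occS k j (inst l G ts) = occS k j G"
  "allpol b k j (inst l G ts) = allpol b k j G"
  "is_type (inst l G ts) = is_type G"
  "ends_in_Bot (inst l G ts) = ends_in_Bot G"
  by (simp_all add: inst_def)

lemma inj_upR: "inj f \<Longrightarrow> inj (upR f)"
proof (rule injI)
  fix x y assume "inj f" "upR f x = upR f y"
  thus "x = y" by (cases x; cases y) (auto simp: upR_def inj_eq)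
qed

lemma inj_upR_update: "\<forall>a. inj (fs a) \<Longrightarrow> \<forall>a. inj ((fs(n := upR (fs n))) a)"
  by (simp add: inj_upR)

lemma occS_allpol_renP_inj:
  "\<forall>a. inj (fs a) \<Longrightarrow> occS m (fs m i) (renP fp fs A) = occS m i A"
  "\<forall>a. inj (fs a) \<Longrightarrow> allpol b m (fs m i) (renP fp fs A) = allpol b m i A"
proof (induction A arbitrary: fp fs m i b)
  case (PS j ts)
  { case 1 thus ?case by (auto simp: inj_eq) }
  { case 2 thus ?case by (auto simp: inj_eq) }
next
  case (Mu A ts)
  { case 1
    let ?fs = "fs(length ts := upR (fs (length ts)))"
    let ?i = "if length ts = m then Suc i else i"
    have "\<forall>a. inj (?fs a)" using 1 by (rule inj_upR_update)
    hence "occS m (?fs m ?i) (renP fp ?fs A) = occS m ?i A"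
      by (rule Mu.IH(1))
    moreover have "?fs m ?i = (if length ts = m then Suc (fs m i) else fs m i)"
      by (simp add: upR_def)
    ultimately show ?case by (auto split: if_splits) }
  { case 2
    let ?fs = "fs(length ts := upR (fs (length ts)))"
    let ?i = "if length ts = m then Suc i else i"
    have "\<forall>a. inj (?fs a)" using 2 by (rule inj_upR_update)
    hence "allpol b m (?fs m ?i) (renP fp ?fs A) = allpol b m ?i A"
      by (rule Mu.IH(2))
    moreover have "?fs m ?i = (if length ts = m then Suc (fs m i) else fs m i)"
      by (simp add: upR_def)
    ultimately show ?case by (auto split: if_splits) }
qed auto

lemma occS_allpol_renP_outside_range:
  "\<forall>i. fs m i \<noteq> j \<Longrightarrow> \<not> occS m j (renP fp fs A)"
  "\<forall>i. fs m i \<noteq> j \<Longrightarrow> allpol b m j (renP fp fs A)"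
proof (induction A arbitrary: fp fs m j b)
  case (Mu A ts)
  { case 1
    hence "\<forall>i. (fs(length ts := upR (fs (length ts)))) m i \<noteq> (if length ts = m then Suc j else j)"
      by (auto simp: upR_def split: nat.splits)
    thus ?case using Mu.IH(1) by simp }
  { case 2
    hence "\<forall>i. (fs(length ts := upR (fs (length ts)))) m i \<noteq> (if length ts = m then Suc j else j)"
      by (auto simp: upR_def split: nat.splits)
    thus ?case using Mu.IH(2) by simp }
qed auto

lemma ends_in_Bot_renP [simp]: "ends_in_Bot (renP fp fs A) = ends_in_Bot A"
  by (induction A arbitrary: fp fs) auto

lemma is_type_renP_inj: "\<forall>a. inj (fs a) \<Longrightarrow> is_type (renP fp fs A) = is_type A"
proof (induction A arbitrary: fp fs)
  case (Mu A ts)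
  let ?fs = "fs(length ts := upR (fs (length ts)))"
  have "\<forall>a. inj (?fs a)"
    using Mu.prems by (rule inj_upR_update)
  moreover have "?fs (length ts) 0 = 0"
    by (simp add: upR_def)
  ultimately show ?case
    using Mu.IH occS_allpol_renP_inj(1)[where fs="?fs" and m="length ts" and i=0 and fp=fp and A=A]
      occS_allpol_renP_inj(2)[where fs="?fs" and m="length ts" and i=0 and fp=fp and A=A and b=True]
    by (simp add: positiveS_def)
qed auto

lemma shP_invariants [simp]:
  "occS m i (shP n A) = occS m i A"
  "allpol b m i (shP n A) = allpol b m i A"
  "is_type (shP n A) = is_type A"
  "ends_in_Bot (shP n A) = ends_in_Bot A"
  using occS_allpol_renP_inj(1)[where fs="\<lambda>a. id" and m=m and i=i and fp="\<lambda>a. if a = n then Suc else id" and A=A]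
    occS_allpol_renP_inj(2)[where fs="\<lambda>a. id" and m=m and i=i and fp="\<lambda>a. if a = n then Suc else id" and A=A and b=b]
    is_type_renP_inj[where fs="\<lambda>a. id" and fp="\<lambda>a. if a = n then Suc else id" and A=A]
  by (simp_all add: shP_def)

lemma shS_invariants [simp]:
  "occS k (if k = n then Suc j else j) (shS n A) = occS k j A"
  "allpol b k (if k = n then Suc j else j) (shS n A) = allpol b k j A"
  "is_type (shS n A) = is_type A"
  "ends_in_Bot (shS n A) = ends_in_Bot A"
proof -
  have inj: "\<forall>a. inj (if a = n then Suc else id)" by auto
  show "occS k (if k = n then Suc j else j) (shS n A) = occS k j A"
    and "allpol b k (if k = n then Suc j else j) (shS n A) = allpol b k j A"
    using occS_allpol_renP_inj(1)[OF inj, where m=k and i=j and fp="\<lambda>a. id" and A=A]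
      occS_allpol_renP_inj(2)[OF inj, where m=k and i=j and fp="\<lambda>a. id" and A=A and b=b]
    by (cases "k = n"; simp add: shS_def)+
  show "is_type (shS n A) = is_type A" "ends_in_Bot (shS n A) = ends_in_Bot A"
    using is_type_renP_inj[OF inj] by (simp_all add: shS_def)
qed

lemma shS_fresh [simp]: "\<not> occS n 0 (shS n A)" "allpol b n 0 (shS n A)"
  using occS_allpol_renP_outside_range[of "\<lambda>a. if a = n then Suc else id" n 0]
  by (simp_all add: shS_def)

lemma upPS_shifted: "upPS n \<tau> m (if m = n then Suc i else i) = shS n (\<tau> m i)"
  by (simp add: upPS_def)

lemma upPS_index_cases:
  obtains "m = n" "i = 0" | i' where "i = (if m = n then Suc i' else i')"
  by (cases "m = n"; cases i) auto

lemma ends_in_Bot_substP: "ends_in_Bot A \<Longrightarrow> ends_in_Bot (substP \<sigma>P \<sigma>S A)"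
  by (induction A arbitrary: \<sigma>P \<sigma>S) auto

lemma ends_in_Bot_upPV: "ends_in_Bot (upPV n \<sigma> m i) \<Longrightarrow> \<exists>m i. ends_in_Bot (\<sigma> m i)"
  by (auto simp: upPV_def idPV_def split: if_splits nat.splits)

lemma ends_in_Bot_upPS: "ends_in_Bot (upPS n \<sigma> m i) \<Longrightarrow> \<exists>m i. ends_in_Bot (\<sigma> m i)"
  by (auto simp: upPS_def idPS_def split: if_splits nat.splits)

lemma ends_in_Bot_substP_source:
  "ends_in_Bot (substP \<sigma>P \<sigma>S A) \<Longrightarrow>
     ends_in_Bot A \<or> (\<exists>m i. ends_in_Bot (\<sigma>P m i)) \<or> (\<exists>m i. ends_in_Bot (\<sigma>S m i))"
proof (induction A arbitrary: \<sigma>P \<sigma>S)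
  case (AllT A)
  thus ?case using AllT.IH[of "liftFOa 1 \<sigma>P" "liftFOa 1 \<sigma>S"] by auto
next
  case (AllP n A)
  thus ?case using AllP.IH[of "upPV n \<sigma>P" "\<lambda>m i. shP n (\<sigma>S m i)"] ends_in_Bot_upPV by auto
next
  case (Mu A ts) thus ?case by (fastforce dest: ends_in_Bot_upPS)
qed auto

lemma occS_substP:
  "occS m i A \<Longrightarrow> occS k j (\<sigma>S m i) \<Longrightarrow> occS k j (substP \<sigma>P \<sigma>S A)"
proof (induction A arbitrary: \<sigma>P \<sigma>S m i k j)
  case (Mu A ts)
  let ?n = "length ts"
  have "occS m (if m = ?n then Suc i else i) A"
    using Mu.prems by (auto split: if_splits)
  moreover have "occS k (if k = ?n then Suc j else j)
                   (upPS ?n (liftFOa ?n \<sigma>S) m (if m = ?n then Suc i else i))"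
    unfolding upPS_shifted using Mu.prems by simp
  ultimately show ?case
    using Mu.IH[where \<sigma>S="upPS ?n (liftFOa ?n \<sigma>S)"] by (simp add: eq_commute[of ?n])
qed auto

text \<open>An occurrence of \<open>(k, j)\<close> inside a formula substituted at an occurrence of \<open>(m, i)\<close>
  gets the product of the two polarities; \<open>\<not> allpol c m i A\<close> says that \<open>(m, i)\<close> has an
  occurrence of polarity \<open>\<not> c\<close> in \<open>A\<close>.\<close>
lemma allpol_substP:
  assumes "\<forall>m i. \<not> occS k j (\<sigma>P m i)"
    and "\<forall>m i. (\<not> allpol b m i A \<longrightarrow> allpol False k j (\<sigma>S m i)) \<and>
               (\<not> allpol (\<not> b) m i A \<longrightarrow> allpol True k j (\<sigma>S m i))"
  shows "allpol b k j (substP \<sigma>P \<sigma>S A)"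
  using assms
proof (induction A arbitrary: b \<sigma>P \<sigma>S k j)
  case (PV i ts) thus ?case by (simp add: allpol_if_not_occS)
next
  case (PS i ts) thus ?case by (cases b) auto
next
  case (Arr A B)
  have "allpol (\<not> b) k j (substP \<sigma>P \<sigma>S A)"
    by (rule Arr.IH(1)) (use Arr.prems in auto)
  moreover have "allpol b k j (substP \<sigma>P \<sigma>S B)"
    by (rule Arr.IH(2)) (use Arr.prems in auto)
  ultimately show ?case by simp
next
  case (AllT A)
  have "allpol b k j (substP (liftFOa 1 \<sigma>P) (liftFOa 1 \<sigma>S) A)"
    by (rule AllT.IH) (use AllT.prems in auto)
  thus ?case by simp
next
  case (AllP n A)
  have "\<forall>m i. \<not> occS k j (upPV n \<sigma>P m i)"
    using AllP.prems(1) by (auto simp: upPV_def idPV_def split: nat.splits)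
  hence "allpol b k j (substP (upPV n \<sigma>P) (\<lambda>m i. shP n (\<sigma>S m i)) A)"
    by (rule AllP.IH) (use AllP.prems(2) in auto)
  thus ?case by simp
next
  case (Mu A ts)
  let ?n = "length ts"
  let ?j = "if k = ?n then Suc j else j"
  let ?\<sigma>S = "upPS ?n (liftFOa ?n \<sigma>S)"
  have \<sigma>S: "\<forall>m i. (\<not> allpol b m i A \<longrightarrow> allpol False k ?j (?\<sigma>S m i)) \<and>
              (\<not> allpol (\<not> b) m i A \<longrightarrow> allpol True k ?j (?\<sigma>S m i))"
  proof (intro allI)
    fix m i
    show "(\<not> allpol b m i A \<longrightarrow> allpol False k ?j (?\<sigma>S m i)) \<and>
          (\<not> allpol (\<not> b) m i A \<longrightarrow> allpol True k ?j (?\<sigma>S m i))"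
    proof (cases rule: upPS_index_cases[of m ?n i])
      case 1 thus ?thesis by (auto simp: upPS_def idPS_def inst_def)
    next
      case (2 i')
      have "allpol c k ?j (?\<sigma>S m i) = allpol c k j (\<sigma>S m i')" for c
        unfolding 2 upPS_shifted by simp
      moreover have "allpol c m i A = allpol c m i' (Mu A ts)" for c
        using 2 by (auto simp: eq_commute[of ?n])
      ultimately show ?thesis using Mu.prems(2) by metis
    qed
  qed
  have \<sigma>P: "\<forall>m i. \<not> occS k ?j (shS ?n (liftFOa ?n \<sigma>P m i))"
    using Mu.prems(1) by simp
  have "allpol b k ?j (substP (\<lambda>m i. shS ?n (liftFOa ?n \<sigma>P m i)) ?\<sigma>S A)"
    by (rule Mu.IH[OF \<sigma>P \<sigma>S])
  thus ?case by (simp add: eq_commute[of ?n])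
qed auto

lemma is_type_substP:
  "is_type A \<Longrightarrow> \<forall>m i. is_type (\<sigma>P m i) \<Longrightarrow> \<forall>m i. is_type (\<sigma>S m i) \<Longrightarrow>
   is_type (substP \<sigma>P \<sigma>S A)"
proof (induction A arbitrary: \<sigma>P \<sigma>S)
  case (AllP n A)
  have "\<forall>m i. is_type (upPV n \<sigma>P m i)"
    using AllP.prems by (auto simp: upPV_def idPV_def split: nat.splits)
  thus ?case using AllP by simp
next
  case (Mu A ts)
  let ?n = "length ts"
  let ?\<sigma>P = "\<lambda>m i. shS ?n (liftFOa ?n \<sigma>P m i)"
  let ?\<sigma>S = "upPS ?n (liftFOa ?n \<sigma>S)"
  have A: "is_type A" "occS ?n 0 A" "allpol True ?n 0 A"
    using Mu.prems by (auto simp: positiveS_def)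
  have \<sigma>S0: "?\<sigma>S ?n 0 = PS 0 (map TV [0..<?n])"
    by (simp add: upPS_def idPS_def)
  have "\<forall>m i. is_type (?\<sigma>S m i)"
    using Mu.prems by (auto simp: upPS_def idPS_def split: nat.splits)
  moreover have "occS ?n 0 (substP ?\<sigma>P ?\<sigma>S A)"
    using occS_substP[OF A(2)] \<sigma>S0 by simp
  moreover have "allpol True ?n 0 (substP ?\<sigma>P ?\<sigma>S A)"
  proof (rule allpol_substP)
    show "\<forall>m i. \<not> occS ?n 0 (?\<sigma>P m i)" by simp
    show "\<forall>m i. (\<not> allpol True m i A \<longrightarrow> allpol False ?n 0 (?\<sigma>S m i)) \<and>
                (\<not> allpol (\<not> True) m i A \<longrightarrow> allpol True ?n 0 (?\<sigma>S m i))"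
    proof (intro allI)
      fix m i
      show "(\<not> allpol True m i A \<longrightarrow> allpol False ?n 0 (?\<sigma>S m i)) \<and>
            (\<not> allpol (\<not> True) m i A \<longrightarrow> allpol True ?n 0 (?\<sigma>S m i))"
      proof (cases rule: upPS_index_cases[of m ?n i])
        case 1 thus ?thesis using A(3) \<sigma>S0 by auto
      next
        case (2 i') thus ?thesis unfolding 2 upPS_shifted by simp
      qed
    qed
  qed
  ultimately show ?case
    using Mu.IH[OF A(1)] Mu.prems(2) by (simp add: positiveS_def)
qed auto

lemma is_type_unfoldMu: "is_type (Mu D ts) \<Longrightarrow> is_type (unfoldMu D ts)"
  unfolding unfoldMu_def substC_def
  by (rule is_type_substP) (auto simp: shF_def idPV_def idPS_def positiveS_def split: nat.splits)

lemma ends_in_Bot_unfoldMu: "ends_in_Bot (unfoldMu D ts) = ends_in_Bot D"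
proof
  show "ends_in_Bot (unfoldMu D ts) \<Longrightarrow> ends_in_Bot D"
    unfolding unfoldMu_def substC_def
    by (drule ends_in_Bot_substP_source)
       (auto simp: shF_def idPV_def idPS_def split: if_splits nat.splits)
  show "ends_in_Bot D \<Longrightarrow> ends_in_Bot (unfoldMu D ts)"
    by (simp add: unfoldMu_def substC_def ends_in_Bot_substP)
qed

lemma subty_is_type: "subty E A B \<Longrightarrow> is_type A \<and> is_type B"
  by (induction rule: subty.induct) (auto simp: shF_def is_type_unfoldMu)

lemma subty_ends_in_Bot: "subty E A B \<Longrightarrow> ends_in_Bot A \<Longrightarrow> ends_in_Bot B"
  by (induction rule: subty.induct)
     (auto simp: shF_def substX_def substC_def ends_in_Bot_unfoldMu ends_in_Bot_substP)

theorem lemma6p1: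
  fixes E :: "('f trm \<times> 'f trm) set" and A B :: "'f ty"
  assumes "botty A" and "subty E A B"
  shows "botty B"
  using assms subty_is_type subty_ends_in_Bot unfolding botty_iff_is_type_ends_in_Bot by blast

end
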